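(* Let $M$ be a $4$-dimensional manifold with local coordinates $(x^1,\dots,x^4)$, $e_i=\partial/\partial x^i$, and Riemannian metric $g$ with components \[(g_{ij})=\begin{pmatrix} A&B&C&B\\ B&A&B&C\\ C&B&A&B\\ B&C&B&A\end{pmatrix},\] $A,B,C$ smooth functions with $A>C>B>0$. Let $P$ be the almost product structure with component matrix having rows $(0,0,1,0),(0,0,0,1),(1,0,0,0),(0,1,0,0)$. Then $(M,g,P)$ belongs to the class $\mathcal{W}_1$ if and only if \[(A+C)(B_4-B_2)=B(A_4-C_2+C_4-A_2),\qquad (A+C)(B_3-B_1)=B(A_3-C_1+C_3-A_1),\] where $A_i=\partial A/\partial x^i$, $B_i=\partial B/\partial x^i$, $C_i=\partial C/\partial x^i$.
   Context: Let $\nabla$ be the Levi-Civita connection of $g$, $F(x,y,z)=g((\nabla_xP)y,z)$, and $\theta(x)=g^{ij}F(e_i,e_j,x)$ with $(g^{ij})$ the inverse of $(g_{ij})$. The manifold $(M,g,P)$ belongs to the class $\mathcal{W}_1$ if for all vector fields $x,y,z$: \[F(x,y,z)=\tfrac14\big[g(x,y)\theta(z)+g(x,z)\theta(y)-g(x,Py)\theta(Pz)-g(x,Pz)\theta(Py)\big].\] *)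

theory Defs
  imports "HOL-Analysis.Analysis"
begin

text \<open>A coordinate chart of the 4-manifold is modelled by an open set U of real^4.
  Coordinates x^1..x^4 correspond to indices 1,2,3,4 of the numeral type 4
  (so that the list-based constructor vector, which starts at index 1, matches).\<close>

definition pd :: "(real^4 \<Rightarrow> real) \<Rightarrow> 4 \<Rightarrow> real^4 \<Rightarrow> real" where
  "pd f i p = deriv (\<lambda>t. f (p + t *\<^sub>R axis i 1)) 0"

coinductive smooth_on4 :: "(real^4) set \<Rightarrow> (real^4 \<Rightarrow> real) \<Rightarrow> bool" where
  "f differentiable_on U \<Longrightarrow> (\<And>i. smooth_on4 U (pd f i)) \<Longrightarrow> smooth_on4 U f"

definition gform :: "real^4^4 \<Rightarrow> real^4 \<Rightarrow> real^4 \<Rightarrow> real" where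
  "gform Gm a b = (\<Sum>i\<in>UNIV. \<Sum>j\<in>UNIV. Gm $ i $ j * a $ i * b $ j)"

text \<open>Christoffel symbols Gamma^k_{ij} of the Levi-Civita connection of the metric field G
  (nabla_{e_i} e_j = sum_k Gamma^k_{ij} e_k).\<close>
definition christoffel :: "(real^4 \<Rightarrow> real^4^4) \<Rightarrow> 4 \<Rightarrow> 4 \<Rightarrow> 4 \<Rightarrow> real^4 \<Rightarrow> real" where
  "christoffel G k i j p = (1/2) * (\<Sum>l\<in>UNIV. matrix_inv (G p) $ k $ l *
      (pd (\<lambda>q. G q $ j $ l) i p + pd (\<lambda>q. G q $ i $ l) j p - pd (\<lambda>q. G q $ i $ j) l p))"

text \<open>Components of nabla_{e_i} P for a (1,1)-tensor field P with P e_j = sum_l (P $ l $ j) e_l.\<close>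
definition covP :: "(real^4 \<Rightarrow> real^4^4) \<Rightarrow> (real^4 \<Rightarrow> real^4^4) \<Rightarrow> real^4 \<Rightarrow> 4 \<Rightarrow> real^4^4" where
  "covP G P p i = (\<chi> l j. pd (\<lambda>q. P q $ l $ j) i p
      + (\<Sum>k\<in>UNIV. christoffel G l i k p * P p $ k $ j)
      - (\<Sum>k\<in>UNIV. christoffel G k i j p * P p $ l $ k))"

text \<open>F(x,y,z) = g((nabla_x P) y, z) at the point p, for tangent vectors x,y,z at p.\<close>
definition Ften :: "(real^4 \<Rightarrow> real^4^4) \<Rightarrow> (real^4 \<Rightarrow> real^4^4) \<Rightarrow> real^4 \<Rightarrow> real^4 \<Rightarrow> real^4 \<Rightarrow> real^4 \<Rightarrow> real" where
  "Ften G P p x y z = gform (G p) (\<Sum>i\<in>UNIV. x $ i *\<^sub>R (covP G P p i *v y)) z"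

definition theta :: "(real^4 \<Rightarrow> real^4^4) \<Rightarrow> (real^4 \<Rightarrow> real^4^4) \<Rightarrow> real^4 \<Rightarrow> real^4 \<Rightarrow> real" where
  "theta G P p x = (\<Sum>i\<in>UNIV. \<Sum>j\<in>UNIV. matrix_inv (G p) $ i $ j * Ften G P p (axis i 1) (axis j 1) x)"

text \<open>The class W_1 (F is tensorial, so the condition is imposed pointwise on all tangent vectors).\<close>
definition in_W1 :: "(real^4) set \<Rightarrow> (real^4 \<Rightarrow> real^4^4) \<Rightarrow> (real^4 \<Rightarrow> real^4^4) \<Rightarrow> bool" where
  "in_W1 U G P \<longleftrightarrow> (\<forall>p\<in>U. \<forall>x y z.
     Ften G P p x y z = (1/4) * (gform (G p) x y * theta G P p z + gform (G p) x z * theta G P p y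
        - gform (G p) x (P p *v y) * theta G P p (P p *v z)
        - gform (G p) x (P p *v z) * theta G P p (P p *v y)))"

definition metricABC :: "(real^4 \<Rightarrow> real) \<Rightarrow> (real^4 \<Rightarrow> real) \<Rightarrow> (real^4 \<Rightarrow> real) \<Rightarrow> real^4 \<Rightarrow> real^4^4" where
  "metricABC A B C p = vector [vector [A p, B p, C p, B p], vector [B p, A p, B p, C p],
                              vector [C p, B p, A p, B p], vector [B p, C p, B p, A p]]"

definition Pstruct :: "real^4 \<Rightarrow> real^4^4" where
  "Pstruct p = vector [vector [0, 0, 1, 0], vector [0, 0, 0, 1], vector [1, 0, 0, 0], vector [0, 1, 0, 0]]"

end

theory Submission
  imports Defs
begin

(* The metric is circulant in the index ring 4 = Z/4, with first row (a, b, c, b), and P is the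
   index shift by 2. Hence P is constant, g-symmetric and commutes with g, so that
   F(e_i, e_j, e_k) = Gamma_{i,j+2,k} - Gamma_{i,j,k+2} in Christoffel symbols of the first kind.
   The characters of Z/4 diagonalise g, with eigenvalues a+2b+c, a-c, a-c, a-2b+c; inverting
   them gives theta in closed form. Substituting, the W1 defect of F at (e_i, e_j, e_k) is
   (S_ij e_k + S_ik e_j) / (2 (a+2b+c) (a-2b+c)), where S is the circulant with first row
   (2b, a+c, 2b, a+c) and e_k = (a+c)(B_{k+2} - B_k) - b(A_{k+2} + C_{k+2} - A_k - C_k).
   As S has diagonal 2b > 0, the defect vanishes iff e = 0, and since e_{k+2} = -e_k this is
   the pair of equations of the theorem. *)

lemma trilinear_eq_0_on_Basis:
  fixes h :: "'a::euclidean_space \<Rightarrow> 'b::euclidean_space \<Rightarrow> 'c::euclidean_space \<Rightarrow> real"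
  assumes lin1: "\<And>y z. linear (\<lambda>x. h x y z)"
    and lin2: "\<And>x z. linear (\<lambda>y. h x y z)"
    and lin3: "\<And>x y. linear (\<lambda>z. h x y z)"
    and basis: "\<And>u v w. u \<in> Basis \<Longrightarrow> v \<in> Basis \<Longrightarrow> w \<in> Basis \<Longrightarrow> h u v w = 0"
  shows "h x y z = 0"
proof -
  have "(\<lambda>w. h u v w) = (\<lambda>_. 0)" if "u \<in> Basis" "v \<in> Basis" for u v
    by (rule linear_eq_stdbasis) (use lin3 basis that linear_zero in auto)
  then have "(\<lambda>v. h u v z) = (\<lambda>_. 0)" if "u \<in> Basis" for u
    by (intro linear_eq_stdbasis) (use lin2 that linear_zero in \<open>auto dest: fun_cong\<close>)
  then have "(\<lambda>u. h u y z) = (\<lambda>_. 0)"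
    by (intro linear_eq_stdbasis) (use lin1 linear_zero in \<open>auto dest: fun_cong\<close>)
  then show ?thesis
    by (rule fun_cong)
qed

lemma sum_axis_scaleR: "(\<Sum>a\<in>UNIV. axis i (1::real) $ a *\<^sub>R f a) = (f i :: 'a::real_vector)"
  by (simp add: axis_def if_distrib[where f="\<lambda>x. x *\<^sub>R _"] cong: if_cong)

lemma matrix_mult_diff_left: "(A :: 'a::ring_1^'n^'m) ** (B - C) = A ** B - A ** C"
  by (simp add: matrix_matrix_mult_def vec_eq_iff algebra_simps sum_subtractf)

lemma matrix_vector_mult_axis_nth: "((M :: real^'n^'m) *v axis j 1) $ l = M $ l $ j"
  by (simp add: matrix_vector_mult_basis column_def)

lemma matrix_inv_eq:
  fixes A :: "'a::semiring_1^'n^'n"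
  assumes "A ** B = mat 1" and "B ** A = mat 1"
  shows "matrix_inv A = B"
proof -
  have inv: "A ** matrix_inv A = mat 1 \<and> matrix_inv A ** A = mat 1"
    unfolding matrix_inv_def by (rule someI[where x=B]) (use assms in simp)
  have "matrix_inv A = matrix_inv A ** (A ** B)"
    by (simp add: assms(1))
  also have "\<dots> = B"
    using inv by (simp add: matrix_mul_assoc)
  finally show ?thesis .
qed

lemma symmetrized_product_eq_0_iff:
  fixes S :: "'a::field_char_0^'n^'n" and e :: "'n \<Rightarrow> 'a"
  assumes "\<And>k. S $ k $ k \<noteq> 0"
  shows "(\<forall>i j k. S $ i $ j * e k + S $ i $ k * e j = 0) \<longleftrightarrow> (\<forall>k. e k = 0)"
proof
  assume "\<forall>i j k. S $ i $ j * e k + S $ i $ k * e j = 0"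
  then have "2 * (S $ k $ k * e k) = 0" for k
    by (metis mult_2)
  then show "\<forall>k. e k = 0"
    using assms by simp
qed simp

lemma gform_add_scaleR:
  "gform M (a + a') b = gform M a b + gform M a' b"
  "gform M (r *\<^sub>R a) b = r * gform M a b"
  "gform M a (b + b') = gform M a b + gform M a b'"
  "gform M a (r *\<^sub>R b) = r * gform M a b"
  unfolding gform_def by (simp_all add: algebra_simps sum.distrib sum_distrib_left)

lemma Ften_add_scaleR:
  "Ften G P p (x + x') y z = Ften G P p x y z + Ften G P p x' y z"
  "Ften G P p (r *\<^sub>R x) y z = r * Ften G P p x y z"
  "Ften G P p x (y + y') z = Ften G P p x y z + Ften G P p x y' z"
  "Ften G P p x (r *\<^sub>R y) z = r * Ften G P p x y z"
  "Ften G P p x y (z + z') = Ften G P p x y z + Ften G P p x y z'"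
  "Ften G P p x y (r *\<^sub>R z) = r * Ften G P p x y z"
  unfolding Ften_def
  by (simp_all add: gform_add_scaleR scaleR_add_left scaleR_add_right sum.distrib
      matrix_vector_right_distrib matrix_vector_mult_scaleR scaleR_sum_right mult.commute
      flip: gform_add_scaleR(2))

lemma theta_add_scaleR:
  "theta G P p (z + z') = theta G P p z + theta G P p z'"
  "theta G P p (r *\<^sub>R z) = r * theta G P p z"
  unfolding theta_def by (simp_all add: Ften_add_scaleR algebra_simps sum.distrib sum_distrib_left)

definition W1_residual ::
    "(real^4 \<Rightarrow> real^4^4) \<Rightarrow> (real^4 \<Rightarrow> real^4^4) \<Rightarrow> real^4 \<Rightarrow> real^4 \<Rightarrow> real^4 \<Rightarrow> real^4 \<Rightarrow> real" where
  "W1_residual G P p x y z = Ften G P p x y z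
     - (1/4) * (gform (G p) x y * theta G P p z + gform (G p) x z * theta G P p y
        - gform (G p) x (P p *v y) * theta G P p (P p *v z)
        - gform (G p) x (P p *v z) * theta G P p (P p *v y))"

lemma in_W1_iff_W1_residual_axis:
  "in_W1 U G P \<longleftrightarrow> (\<forall>p\<in>U. \<forall>i j k. W1_residual G P p (axis i 1) (axis j 1) (axis k 1) = 0)"
proof -
  have "W1_residual G P p x y z = 0"
    if "\<forall>i j k. W1_residual G P p (axis i 1) (axis j 1) (axis k 1) = 0" for p x y z
  proof (rule trilinear_eq_0_on_Basis[where h="W1_residual G P p"])
    show "linear (\<lambda>x. W1_residual G P p x y z)" for y z
      by (rule linearI) (simp_all add: W1_residual_def Ften_add_scaleR gform_add_scaleR algebra_simps)
    show "linear (\<lambda>y. W1_residual G P p x y z)" for x z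
      by (rule linearI) (simp_all add: W1_residual_def Ften_add_scaleR gform_add_scaleR
          theta_add_scaleR matrix_vector_right_distrib matrix_vector_mult_scaleR algebra_simps)
    show "linear (\<lambda>z. W1_residual G P p x y z)" for x y
      by (rule linearI) (simp_all add: W1_residual_def Ften_add_scaleR gform_add_scaleR
          theta_add_scaleR matrix_vector_right_distrib matrix_vector_mult_scaleR algebra_simps)
    show "W1_residual G P p u v w = 0" if "u \<in> Basis" "v \<in> Basis" "w \<in> Basis" for u v w
      using that axis_inverse \<open>\<forall>i j k. _\<close> by metis
  qed
  then show ?thesis
    unfolding in_W1_def by (auto simp: W1_residual_def)
qed

lemma gform_axis_axis: "gform M (axis i 1) (axis j 1) = M $ i $ j"
  unfolding gform_def axis_def
  by (simp add: if_distrib[where f="\<lambda>x. _ * x"] if_distrib[where f="\<lambda>x. x * _"] cong: if_cong)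

lemma gform_axis_right: "gform M v (axis k 1) = (\<Sum>l\<in>UNIV. M $ l $ k * v $ l)"
  unfolding gform_def axis_def
  by (simp add: if_distrib[where f="\<lambda>x. _ * x"] if_distrib[where f="\<lambda>x. x * _"] mult.commute
      cong: if_cong)

lemma pd_const: "pd (\<lambda>q. r) i p = 0"
  by (simp add: pd_def)

definition metric_pd :: "(real^4 \<Rightarrow> real^4^4) \<Rightarrow> real^4 \<Rightarrow> 4 \<Rightarrow> real^4^4" where
  "metric_pd G p m = (\<chi> j l. pd (\<lambda>q. G q $ j $ l) m p)"

definition christoffel1 :: "(4 \<Rightarrow> real^4^4) \<Rightarrow> 4 \<Rightarrow> 4 \<Rightarrow> 4 \<Rightarrow> real" where
  "christoffel1 dG i j l = (dG i $ j $ l + dG j $ i $ l - dG l $ i $ j) / 2"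

lemma christoffel_eq_sum_christoffel1:
  "christoffel G k i j p = (\<Sum>l\<in>UNIV. matrix_inv (G p) $ k $ l * christoffel1 (metric_pd G p) i j l)"
  unfolding christoffel_def christoffel1_def metric_pd_def
  by (simp add: sum_distrib_left field_simps)

lemma lower_christoffel:
  assumes "G p ** matrix_inv (G p) = mat 1"
  shows "(\<Sum>l\<in>UNIV. G p $ k $ l * christoffel G l i j p) = christoffel1 (metric_pd G p) i j k"
proof -
  have "(\<chi> l. christoffel G l i j p) = matrix_inv (G p) *v (\<chi> n. christoffel1 (metric_pd G p) i j n)"
    by (simp add: vec_eq_iff matrix_vector_mult_def christoffel_eq_sum_christoffel1)
  then have "G p *v (\<chi> l. christoffel G l i j p) = (\<chi> n. christoffel1 (metric_pd G p) i j n)"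
    by (simp add: matrix_vector_mul_assoc assms)
  then show ?thesis
    by (simp add: vec_eq_iff matrix_vector_mult_def)
qed

lemma Ften_axis:
  assumes inv: "G p ** matrix_inv (G p) = mat 1"
    and sym: "transpose (G p) = G p"
    and const: "\<And>l j. pd (\<lambda>q. P q $ l $ j) i p = 0"
    and self_adjoint: "transpose (P p) ** G p = G p ** P p"
  shows "Ften G P p (axis i 1) (axis j 1) (axis k 1)
      = (\<Sum>m\<in>UNIV. christoffel1 (metric_pd G p) i m k * P p $ m $ j)
        - (\<Sum>l\<in>UNIV. P p $ l $ k * christoffel1 (metric_pd G p) i j l)"
proof -
  define \<Gamma> where "\<Gamma> = (\<chi> l m. christoffel G l i m p)"
  have lowered: "G p ** \<Gamma> = (\<chi> k m. christoffel1 (metric_pd G p) i m k)"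
    using lower_christoffel[where G=G and p=p, OF inv] by (simp add: \<Gamma>_def vec_eq_iff matrix_matrix_mult_def)
  have cov: "covP G P p i = \<Gamma> ** P p - P p ** \<Gamma>"
    by (simp add: covP_def const \<Gamma>_def vec_eq_iff matrix_matrix_mult_def mult.commute)
  have "Ften G P p (axis i 1) (axis j 1) (axis k 1) = (transpose (G p) ** covP G P p i) $ k $ j"
    by (simp add: Ften_def gform_axis_right sum_axis_scaleR matrix_vector_mult_axis_nth
        matrix_matrix_mult_def transpose_def)
  also have "\<dots> = ((G p ** \<Gamma>) ** P p - transpose (P p) ** (G p ** \<Gamma>)) $ k $ j"
    by (simp add: sym cov matrix_mult_diff_left matrix_mul_assoc self_adjoint)
  also have "\<dots> = (\<Sum>m\<in>UNIV. christoffel1 (metric_pd G p) i m k * P p $ m $ j)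
        - (\<Sum>l\<in>UNIV. P p $ l $ k * christoffel1 (metric_pd G p) i j l)"
    by (simp only: lowered) (simp add: matrix_matrix_mult_def transpose_def mult.commute)
  finally show ?thesis .
qed

lemma vector_4 [simp]:
  "(vector [x1, x2, x3, x4] :: 'a::zero^4) $ 1 = x1"
  "(vector [x1, x2, x3, x4] :: 'a::zero^4) $ 2 = x2"
  "(vector [x1, x2, x3, x4] :: 'a::zero^4) $ 3 = x3"
  "(vector [x1, x2, x3, x4] :: 'a::zero^4) $ 4 = x4"
  by (simp_all add: vector_def)

(* Index arithmetic is modulo 4 (index 4 is 0); simp evaluates 3 + 2 to the numeral 5, which
   these rules reduce. *)
lemma numeral_4_reduce [simp]: "(5::4) = 1" "(6::4) = 2"
  by simp_all

definition abc_matrix :: "real \<Rightarrow> real \<Rightarrow> real \<Rightarrow> real^4^4" where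
  "abc_matrix a b c = (\<chi> i j. if j = i then a else if j = i + 2 then c else b)"

lemma metricABC_eq_abc_matrix: "metricABC A B C p = abc_matrix (A p) (B p) (C p)"
  by (simp add: metricABC_def abc_matrix_def vec_eq_iff forall_4)

lemma Pstruct_eq: "Pstruct p = (\<chi> l j. if l = j + 2 then 1 else 0)"
  by (simp add: Pstruct_def vec_eq_iff forall_4)

lemma Pstruct_mult_axis: "Pstruct p *v axis j 1 = axis (j + 2) 1"
  unfolding matrix_vector_mult_basis column_def by (simp add: Pstruct_eq axis_def vec_eq_iff)

lemma abc_matrix_1_0_0: "abc_matrix 1 0 0 = mat 1"
  by (simp add: abc_matrix_def mat_def vec_eq_iff)

lemma abc_matrix_mult:
  "abc_matrix a b c ** abc_matrix a' b' c' =
     abc_matrix (a*a' + 2*b*b' + c*c') (a*b' + b*a' + b*c' + c*b') (a*c' + 2*b*b' + c*a')"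
  by (simp add: matrix_matrix_mult_def abc_matrix_def vec_eq_iff forall_4 sum_4 algebra_simps)

(* a + 2b + c, a - c and a - 2b + c are the eigenvalues of abc_matrix a b c, and circulants
   multiply eigenvalue by eigenvalue. *)
lemma abc_matrix_mult_eq_mat_1:
  assumes "(a + 2*b + c) * (a' + 2*b' + c') = 1" "(a - c) * (a' - c') = 1"
    and "(a - 2*b + c) * (a' - 2*b' + c') = 1"
  shows "abc_matrix a b c ** abc_matrix a' b' c' = mat 1"
proof -
  have "a*a' + 2*b*b' + c*c' = 1" "a*b' + b*a' + b*c' + c*b' = 0" "a*c' + 2*b*b' + c*a' = 0"
    using assms by (simp_all add: algebra_simps)
  then show ?thesis
    by (simp add: abc_matrix_mult abc_matrix_1_0_0)
qed

lemma transpose_abc_matrix: "transpose (abc_matrix a b c) = abc_matrix a b c"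
  by (simp add: transpose_def abc_matrix_def vec_eq_iff forall_4)

lemma transpose_Pstruct_mult_abc_matrix:
  "transpose (Pstruct p) ** abc_matrix a b c = abc_matrix a b c ** Pstruct p"
  by (simp add: Pstruct_def abc_matrix_def transpose_def matrix_matrix_mult_def vec_eq_iff forall_4 sum_4)

definition abc_inverse :: "real \<Rightarrow> real \<Rightarrow> real \<Rightarrow> real^4^4" where
  "abc_inverse a b c =
     (let u = 1 / (a + 2 * b + c); v = 1 / (a - c); w = 1 / (a - 2 * b + c)
      in abc_matrix ((u + 2 * v + w) / 4) ((u - w) / 4) ((u - 2 * v + w) / 4))"

lemma abc_matrix_mult_abc_inverse:
  assumes "a + 2 * b + c \<noteq> 0" "a - c \<noteq> 0" "a - 2 * b + c \<noteq> 0"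
  shows "abc_matrix a b c ** abc_inverse a b c = mat 1" "abc_inverse a b c ** abc_matrix a b c = mat 1"
proof -
  have eigen: "(u + 2 * v + w) / 4 + 2 * ((u - w) / 4) + (u - 2 * v + w) / 4 = u"
    "(u + 2 * v + w) / 4 - (u - 2 * v + w) / 4 = v"
    "(u + 2 * v + w) / 4 - 2 * ((u - w) / 4) + (u - 2 * v + w) / 4 = w" for u v w :: real
    by (simp_all add: field_simps)
  show "abc_matrix a b c ** abc_inverse a b c = mat 1" "abc_inverse a b c ** abc_matrix a b c = mat 1"
    unfolding abc_inverse_def Let_def
    by (rule abc_matrix_mult_eq_mat_1; simp only: eigen; use assms in simp)+
qed

lemma matrix_inv_abc_matrix:
  assumes "a + 2 * b + c \<noteq> 0" "a - c \<noteq> 0" "a - 2 * b + c \<noteq> 0"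
  shows "matrix_inv (abc_matrix a b c) = abc_inverse a b c"
  using matrix_inv_eq abc_matrix_mult_abc_inverse[OF assms] by blast

lemma metric_pd_metricABC:
  "metric_pd (metricABC A B C) p = (\<lambda>m. abc_matrix (pd A m p) (pd B m p) (pd C m p))"
  by (simp add: metric_pd_def metricABC_def abc_matrix_def vec_eq_iff forall_4 fun_eq_iff)

definition abc_F :: "(4 \<Rightarrow> real) \<Rightarrow> (4 \<Rightarrow> real) \<Rightarrow> (4 \<Rightarrow> real) \<Rightarrow> 4 \<Rightarrow> 4 \<Rightarrow> 4 \<Rightarrow> real" where
  "abc_F dA dB dC i j k =
     (let dG = \<lambda>m. abc_matrix (dA m) (dB m) (dC m)
      in christoffel1 dG i (j + 2) k - christoffel1 dG i j (k + 2))"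

lemma Ften_metricABC_axis:
  assumes "A p + 2 * B p + C p \<noteq> 0" "A p - C p \<noteq> 0" "A p - 2 * B p + C p \<noteq> 0"
  shows "Ften (metricABC A B C) (\<lambda>p. Pstruct p) p (axis i 1) (axis j 1) (axis k 1)
      = abc_F (\<lambda>m. pd A m p) (\<lambda>m. pd B m p) (\<lambda>m. pd C m p) i j k"
proof -
  let ?\<Gamma> = "christoffel1 (metric_pd (metricABC A B C) p)"
  have "Ften (metricABC A B C) (\<lambda>p. Pstruct p) p (axis i 1) (axis j 1) (axis k 1)
      = (\<Sum>m\<in>UNIV. ?\<Gamma> i m k * Pstruct p $ m $ j) - (\<Sum>l\<in>UNIV. Pstruct p $ l $ k * ?\<Gamma> i j l)"
  proof (rule Ften_axis)
    show "metricABC A B C p ** matrix_inv (metricABC A B C p) = mat 1"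
      using abc_matrix_mult_abc_inverse[OF assms]
      by (simp add: metricABC_eq_abc_matrix matrix_inv_abc_matrix[OF assms])
    show "transpose (metricABC A B C p) = metricABC A B C p"
      by (simp add: metricABC_eq_abc_matrix transpose_abc_matrix)
    show "pd (\<lambda>q. Pstruct q $ l $ j) i p = 0" for l j
      by (simp add: Pstruct_def pd_const)
    show "transpose (Pstruct p) ** metricABC A B C p = metricABC A B C p ** Pstruct p"
      by (simp add: metricABC_eq_abc_matrix transpose_Pstruct_mult_abc_matrix)
  qed
  also have "\<dots> = abc_F (\<lambda>m. pd A m p) (\<lambda>m. pd B m p) (\<lambda>m. pd C m p) i j k"
    by (simp add: Pstruct_eq metric_pd_metricABC abc_F_def Let_def if_distrib[where f="\<lambda>x. _ * x"]
        if_distrib[where f="\<lambda>x. x * _"] cong: if_cong)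
  finally show ?thesis .
qed

lemma sum_abc_matrix_abc_F:
  "(\<Sum>i\<in>UNIV. \<Sum>j\<in>UNIV. abc_matrix x y z $ i $ j * abc_F dA dB dC i j k)
     = 2 * x * (dA (k + 2) - dC k) + 4 * y * (dB (k + 2) - dB k) + 2 * z * (dC (k + 2) - dA k)"
  using exhaust_4[of k] unfolding sum_4 abc_F_def christoffel1_def Let_def
  by (elim disjE; simp add: abc_matrix_def field_simps)

definition abc_theta_num ::
    "real \<Rightarrow> real \<Rightarrow> real \<Rightarrow> (4 \<Rightarrow> real) \<Rightarrow> (4 \<Rightarrow> real) \<Rightarrow> (4 \<Rightarrow> real) \<Rightarrow> 4 \<Rightarrow> real" where
  "abc_theta_num a b c dA dB dC k =
     (a + 2 * b + c) * (a - 2 * b + c) * (dA (k + 2) + dA k - dC (k + 2) - dC k)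
     + (a - c) * ((a + c) * (dA (k + 2) - dA k + dC (k + 2) - dC k) - 4 * b * (dB (k + 2) - dB k))"

lemma sum_abc_inverse_abc_F:
  assumes "a + 2 * b + c \<noteq> 0" "a - c \<noteq> 0" "a - 2 * b + c \<noteq> 0"
  shows "(\<Sum>i\<in>UNIV. \<Sum>j\<in>UNIV. abc_inverse a b c $ i $ j * abc_F dA dB dC i j k)
     = abc_theta_num a b c dA dB dC k / ((a + 2 * b + c) * (a - c) * (a - 2 * b + c))"
proof -
  have eigen: "2 * ((u + 2 * v + w) / 4) * P + 4 * ((u - w) / 4) * Q + 2 * ((u - 2 * v + w) / 4) * R
      = u * ((P + 2 * Q + R) / 2) + v * (P - R) + w * ((P - 2 * Q + R) / 2)" for u v w P Q R :: real
    by (simp add: field_simps)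
  have common_denom: "(1 / l0) * p + (1 / l1) * t + (1 / l2) * q = (l1 * l2 * p + l0 * l2 * t + l0 * l1 * q) / (l0 * l1 * l2)"
    if "l0 \<noteq> 0" "l1 \<noteq> 0" "l2 \<noteq> 0" for l0 l1 l2 p t q :: real
    using that by (simp add: field_simps)
  show ?thesis
    unfolding abc_inverse_def Let_def sum_abc_matrix_abc_F eigen common_denom[OF assms]
    by (rule arg_cong[where f="\<lambda>x. x / _"]) (simp add: abc_theta_num_def field_simps)
qed

lemma theta_metricABC_axis:
  assumes "A p + 2 * B p + C p \<noteq> 0" "A p - C p \<noteq> 0" "A p - 2 * B p + C p \<noteq> 0"
  shows "theta (metricABC A B C) (\<lambda>p. Pstruct p) p (axis k 1)
     = abc_theta_num (A p) (B p) (C p) (\<lambda>m. pd A m p) (\<lambda>m. pd B m p) (\<lambda>m. pd C m p) k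
       / ((A p + 2 * B p + C p) * (A p - C p) * (A p - 2 * B p + C p))"
  unfolding theta_def Ften_metricABC_axis[where A=A and B=B and C=C and p=p, OF assms]
    metricABC_eq_abc_matrix matrix_inv_abc_matrix[OF assms]
  by (rule sum_abc_inverse_abc_F[OF assms])

definition abc_W1_defect ::
    "real \<Rightarrow> real \<Rightarrow> real \<Rightarrow> (4 \<Rightarrow> real) \<Rightarrow> (4 \<Rightarrow> real) \<Rightarrow> (4 \<Rightarrow> real) \<Rightarrow> 4 \<Rightarrow> real" where
  "abc_W1_defect a b c dA dB dC k =
     (a + c) * (dB (k + 2) - dB k) - b * (dA (k + 2) + dC (k + 2) - dA k - dC k)"

lemma abc_W1_residual:
  fixes a b c :: real and dA dB dC :: "4 \<Rightarrow> real"
  assumes "a + 2 * b + c \<noteq> 0" "a - c \<noteq> 0" "a - 2 * b + c \<noteq> 0"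
  defines "\<theta> \<equiv> \<lambda>k. abc_theta_num a b c dA dB dC k / ((a + 2 * b + c) * (a - c) * (a - 2 * b + c))"
    and "g \<equiv> abc_matrix a b c" and "S \<equiv> abc_matrix (2 * b) (a + c) (2 * b)"
    and "e \<equiv> abc_W1_defect a b c dA dB dC"
  shows "abc_F dA dB dC i j k
      - 1/4 * (g $ i $ j * \<theta> k + g $ i $ k * \<theta> j - g $ i $ (j + 2) * \<theta> (k + 2) - g $ i $ (k + 2) * \<theta> (j + 2))
    = (S $ i $ j * e k + S $ i $ k * e j) / (2 * ((a + 2 * b + c) * (a - 2 * b + c)))"
proof -
  let ?N = "abc_theta_num a b c dA dB dC"
  have identity: "4 * ((a + 2 * b + c) * (a - c) * (a - 2 * b + c)) * abc_F dA dB dC i j k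
      - (g $ i $ j * ?N k + g $ i $ k * ?N j - g $ i $ (j + 2) * ?N (k + 2) - g $ i $ (k + 2) * ?N (j + 2))
    = 2 * (a - c) * (S $ i $ j * e k + S $ i $ k * e j)"
    using exhaust_4[of i] exhaust_4[of j] exhaust_4[of k]
    unfolding abc_theta_num_def abc_F_def christoffel1_def Let_def g_def S_def e_def abc_W1_defect_def
    by (elim disjE; simp add: abc_matrix_def field_simps)
  have "f - 1/4 * (g1 * (n1 / (l0 * l1 * l2)) + g2 * (n2 / (l0 * l1 * l2))
          - g3 * (n3 / (l0 * l1 * l2)) - g4 * (n4 / (l0 * l1 * l2))) = X / (2 * (l0 * l2))"
    if "4 * (l0 * l1 * l2) * f - (g1 * n1 + g2 * n2 - g3 * n3 - g4 * n4) = 2 * l1 * X"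
      "l0 \<noteq> 0" "l1 \<noteq> 0" "l2 \<noteq> 0" for f g1 g2 g3 g4 n1 n2 n3 n4 X l0 l1 l2 :: real
  proof -
    have f_eq: "f = (g1 * n1 + g2 * n2 - g3 * n3 - g4 * n4 + 2 * l1 * X) / (4 * (l0 * l1 * l2))"
      using that by (simp add: field_simps)
    show ?thesis
      unfolding f_eq using that(2-4) by (simp add: field_simps)
  qed
  from this[OF identity assms(1-3)] show ?thesis
    unfolding \<theta>_def .
qed

lemma W1_residual_metricABC_axis:
  assumes "A p + 2 * B p + C p \<noteq> 0" "A p - C p \<noteq> 0" "A p - 2 * B p + C p \<noteq> 0"
  shows "W1_residual (metricABC A B C) (\<lambda>p. Pstruct p) p (axis i 1) (axis j 1) (axis k 1)
    = (abc_matrix (2 * B p) (A p + C p) (2 * B p) $ i $ j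
          * abc_W1_defect (A p) (B p) (C p) (\<lambda>m. pd A m p) (\<lambda>m. pd B m p) (\<lambda>m. pd C m p) k
       + abc_matrix (2 * B p) (A p + C p) (2 * B p) $ i $ k
          * abc_W1_defect (A p) (B p) (C p) (\<lambda>m. pd A m p) (\<lambda>m. pd B m p) (\<lambda>m. pd C m p) j)
      / (2 * ((A p + 2 * B p + C p) * (A p - 2 * B p + C p)))"
  unfolding W1_residual_def Pstruct_mult_axis gform_axis_axis
    Ften_metricABC_axis[where A=A and B=B and C=C and p=p, OF assms]
    theta_metricABC_axis[where A=A and B=B and C=C and p=p, OF assms] metricABC_eq_abc_matrix
  by (rule abc_W1_residual[OF assms])

lemma abc_W1_defect_eq_0_iff:
  "(\<forall>k. abc_W1_defect a b c dA dB dC k = 0) \<longleftrightarrow>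
     (a + c) * (dB 4 - dB 2) = b * (dA 4 - dC 2 + dC 4 - dA 2) \<and>
     (a + c) * (dB 3 - dB 1) = b * (dA 3 - dC 1 + dC 3 - dA 1)"
  unfolding forall_4 abc_W1_defect_def by (auto simp: algebra_simps)

theorem theorem3p5:
  fixes A B C :: "real^4 \<Rightarrow> real" and U :: "(real^4) set"
  assumes "open U"
    and "smooth_on4 U A" and "smooth_on4 U B" and "smooth_on4 U C"
    and "\<forall>p\<in>U. A p > C p \<and> C p > B p \<and> B p > 0"
  shows "in_W1 U (metricABC A B C) (\<lambda>p. Pstruct p) \<longleftrightarrow>
    (\<forall>p\<in>U.
      (A p + C p) * (pd B 4 p - pd B 2 p) = B p * (pd A 4 p - pd C 2 p + pd C 4 p - pd A 2 p) \<and>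
      (A p + C p) * (pd B 3 p - pd B 1 p) = B p * (pd A 3 p - pd C 1 p + pd C 3 p - pd A 1 p))"
proof -
  have "(\<forall>i j k. W1_residual (metricABC A B C) (\<lambda>p. Pstruct p) p (axis i 1) (axis j 1) (axis k 1) = 0)
      \<longleftrightarrow> (\<forall>k. abc_W1_defect (A p) (B p) (C p) (\<lambda>m. pd A m p) (\<lambda>m. pd B m p) (\<lambda>m. pd C m p) k = 0)"
    if "p \<in> U" for p
  proof -
    have order: "A p > C p" "C p > B p" "B p > 0"
      using assms(5) that by auto
    then have eigen_pos: "A p + 2 * B p + C p > 0" "A p - C p > 0" "A p - 2 * B p + C p > 0"
      by linarith+
    have "abc_matrix (2 * B p) (A p + C p) (2 * B p) $ k $ k \<noteq> 0" for k
      using order by (simp add: abc_matrix_def)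
    then show ?thesis
      using eigen_pos by (simp add: W1_residual_metricABC_axis symmetrized_product_eq_0_iff)
  qed
  then show ?thesis
    by (simp add: in_W1_iff_W1_residual_axis abc_W1_defect_eq_0_iff)
qed

end
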